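(* For every abstraction $\lambda x.M \in \Lambda^\bullet$ and every $N \in \Lambda^\bullet$, we have $\operatorname{RB}((\lambda x.M)\ N) \to_\beta \operatorname{RB}(M[x:=N])$, i.e. the left-hand side reduces to the right-hand side in exactly one $\beta$-step.
   Context: $\Lambda$ is the set of untyped $\lambda$-terms (up to $\alpha$-equivalence), and $\to_\beta$ is one-step $\beta$-reduction on $\Lambda$. For each $M\in\Lambda$ there is a new formal symbol $\underline{M}$, called an atom. Atoms are constants: they have no free variables, and substitution leaves them unchanged. For $M\in\Lambda$, $M^\bullet$ is obtained from $M$ by replacing each free occurrence of each variable $x$ by the atom $\underline{x}$. Set $\Lambda^\bullet=\{M^\bullet : M\in\Lambda\}$; its elements are closed terms that may contain atoms. Substitution $P[x:=Q]$ is extended to such terms, with atoms treated as constants. For $\lambda x.M\in\Lambda^\bullet$ the body $M$ may contain $x$ free, and $M[x:=\underline{x}]\in\Lambda^\bullet$. The read-back map $\operatorname{RB}$ sends each element of $\Lambda^\bullet$ to a $\lambda$-term and is defined by: - $\operatorname{RB}(P\ Q)\equiv\operatorname{RB}(P)\ \operatorname{RB}(Q)$ for $P,Q\in\Lambda^\bullet$; - $\operatorname{RB}(\lambda x.P)\equiv\lambda x.\operatorname{RB}(P[x:=\underline{x}])$ for $\lambda x.P\in\Lambda^\bullet$; - $\operatorname{RB}(\underline{P})\equiv P$ for $P\in\Lambda$. *)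

theory Defs
  imports Main
begin

datatype lterm = Var nat | App lterm lterm | Abs lterm

fun lift :: "lterm \<Rightarrow> nat \<Rightarrow> lterm" where
  "lift (Var i) k = (if i < k then Var i else Var (Suc i))"
| "lift (App s t) k = App (lift s k) (lift t k)"
| "lift (Abs s) k = Abs (lift s (Suc k))"

fun subst :: "lterm \<Rightarrow> lterm \<Rightarrow> nat \<Rightarrow> lterm" where
  "subst (Var i) s k = (if k < i then Var (i - 1) else if i = k then s else Var i)"
| "subst (App t u) s k = App (subst t s k) (subst u s k)"
| "subst (Abs t) s k = Abs (subst t (lift s 0) (Suc k))"

inductive beta :: "lterm \<Rightarrow> lterm \<Rightarrow> bool" where
  beta_redex: "beta (App (Abs s) t) (subst s t 0)"
| beta_appL: "beta s t \<Longrightarrow> beta (App s u) (App t u)"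
| beta_appR: "beta s t \<Longrightarrow> beta (App u s) (App u t)"
| beta_abs: "beta s t \<Longrightarrow> beta (Abs s) (Abs t)"

text \<open>Atom M is the atom underline M; it is a constant.\<close>
datatype eterm = EVar nat | EApp eterm eterm | EAbs eterm | Atom lterm

fun elift :: "eterm \<Rightarrow> nat \<Rightarrow> eterm" where
  "elift (EVar i) k = (if i < k then EVar i else EVar (Suc i))"
| "elift (EApp s t) k = EApp (elift s k) (elift t k)"
| "elift (EAbs s) k = EAbs (elift s (Suc k))"
| "elift (Atom m) k = Atom m"

fun esubst :: "eterm \<Rightarrow> eterm \<Rightarrow> nat \<Rightarrow> eterm" where
  "esubst (EVar i) s k = (if k < i then EVar (i - 1) else if i = k then s else EVar i)"
| "esubst (EApp t u) s k = EApp (esubst t s k) (esubst u s k)"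
| "esubst (EAbs t) s k = EAbs (esubst t (elift s 0) (Suc k))"
| "esubst (Atom m) s k = Atom m"

text \<open>M bullet: every free variable x of M is replaced by the atom of x.
  At depth d, the free variable j is represented by index j + d.\<close>
fun bul :: "nat \<Rightarrow> lterm \<Rightarrow> eterm" where
  "bul d (Var i) = (if i < d then EVar i else Atom (Var (i - d)))"
| "bul d (App s t) = EApp (bul d s) (bul d t)"
| "bul d (Abs s) = EAbs (bul (Suc d) s)"

definition bullet :: "lterm \<Rightarrow> eterm" where
  "bullet M = bul 0 M"

definition LambdaBullet :: "eterm set" where
  "LambdaBullet = range bullet"

text \<open>A bound on the free variables of a lambda-term and of the atoms of an eterm,
  used to choose a fresh variable name for the read-back of an abstraction.\<close>
fun fvbound :: "lterm \<Rightarrow> nat" where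
  "fvbound (Var i) = Suc i"
| "fvbound (App s t) = max (fvbound s) (fvbound t)"
| "fvbound (Abs s) = fvbound s - 1"

fun atbound :: "eterm \<Rightarrow> nat" where
  "atbound (EVar i) = 0"
| "atbound (EApp s t) = max (atbound s) (atbound t)"
| "atbound (EAbs s) = atbound s"
| "atbound (Atom m) = fvbound m"

text \<open>close k d t abstracts the free variable k of t (t viewed at binder depth d):
  free variable k becomes the bound index of a new enclosing binder.\<close>
fun close :: "nat \<Rightarrow> nat \<Rightarrow> lterm \<Rightarrow> lterm" where
  "close k d (Var i) = (if i < d then Var i else if i - d = k then Var d else Var (Suc i))"
| "close k d (App s t) = App (close k d s) (close k d t)"
| "close k d (Abs s) = Abs (close k (Suc d) s)"

fun esz :: "eterm \<Rightarrow> nat" where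
  "esz (EVar i) = 1"
| "esz (EApp s t) = Suc (esz s + esz t)"
| "esz (EAbs s) = Suc (esz s)"
| "esz (Atom m) = 1"

lemma esz_esubst_atom: "esz (esubst t (Atom m) k) = esz t"
  by (induction t arbitrary: k) auto

text \<open>RB(P Q) = RB(P) RB(Q); RB(lambda x.P) = lambda x. RB(P[x := atom x]) with x a
  fresh name; RB(atom P) = P.\<close>
function RB :: "eterm \<Rightarrow> lterm" where
  "RB (EApp P Q) = App (RB P) (RB Q)"
| "RB (EAbs P) = (let x = atbound P in Abs (close x 0 (RB (esubst P (Atom (Var x)) 0))))"
| "RB (Atom M) = M"
| "RB (EVar i) = Var i"
  by pat_completeness auto
termination
  by (relation "measure esz") (auto simp: esz_esubst_atom)

end

theory Submission
  imports Defs
begin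

text \<open>Because atoms are constants, bullet commutes with substitution, and read-back is a
  left inverse of bullet: reading back an abstraction instantiates its bound variable by a
  fresh atom and then closes that name again. Hence the read-back of
  \<open>(\<lambda>x.L)\<^sup>\<bullet> N\<^sup>\<bullet>\<close> is the redex \<open>(\<lambda>x.L) N\<close>, and the read-back of
  \<open>L\<^sup>\<bullet>[x:=N\<^sup>\<bullet>] = (L[x:=N])\<^sup>\<bullet>\<close> is its contractum.\<close>

lemma bul_lift: "j \<le> d \<Longrightarrow> bul (Suc d) (lift s j) = elift (bul d s) j"
  by (induction s arbitrary: j d) auto

lemma esubst_bul: "k \<le> d \<Longrightarrow> esubst (bul (Suc d) t) (bul d s) k = bul d (subst t s k)"
proof (induction t arbitrary: s k d)
  case (Abs t)
  have "elift (bul d s) 0 = bul (Suc d) (lift s 0)"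
    by (simp add: bul_lift)
  with Abs show ?case by simp
qed auto

lemma atbound_bul: "atbound (bul d s) = fvbound s - d"
  by (induction s arbitrary: d) auto

lemma close_subst_Var: "fvbound s \<le> Suc (x + d) \<Longrightarrow> close x d (subst s (Var (x + d)) d) = s"
proof (induction s arbitrary: d)
  case (Abs t)
  have "close x (Suc d) (subst t (Var (x + Suc d)) (Suc d)) = t"
    using Abs.IH[of "Suc d"] Abs.prems by simp
  then show ?case by simp
qed auto

lemma size_subst_Var: "size (subst s (Var y) k) = size s"
  by (induction s arbitrary: y k) auto

lemma RB_bul_0: "RB (bul 0 t) = t"
proof (induction t rule: measure_induct_rule[of size])
  case (less t)
  show ?case
  proof (cases t)
    case (Abs s)
    define x where "x = fvbound s - 1"
    have fresh: "atbound (bul 1 s) = x"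
      by (simp add: atbound_bul x_def)
    have "esubst (bul 1 s) (Atom (Var x)) 0 = esubst (bul (Suc 0) s) (bul 0 (Var x)) 0"
      by simp
    also have "\<dots> = bul 0 (subst s (Var x) 0)"
      by (rule esubst_bul) simp
    finally have instantiate: "esubst (bul 1 s) (Atom (Var x)) 0 = bul 0 (subst s (Var x) 0)" .
    have "RB (bul 0 (subst s (Var x) 0)) = subst s (Var x) 0"
      using less Abs size_subst_Var by simp
    moreover have "close x 0 (subst s (Var x) 0) = s"
      using close_subst_Var[of s x 0] by (simp add: x_def)
    ultimately show ?thesis
      using Abs fresh instantiate by (simp add: Let_def)
  qed (use less in simp_all)
qed

corollary RB_bullet: "RB (bullet t) = t"
  by (simp add: bullet_def RB_bul_0)

lemma LambdaBullet_EAbsE: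
  assumes "EAbs M \<in> LambdaBullet"
  obtains L where "M = bul 1 L" and "EAbs M = bullet (Abs L)"
proof -
  obtain T where T: "EAbs M = bul 0 T"
    using assms by (auto simp: LambdaBullet_def bullet_def)
  then obtain L where "T = Abs L"
    by (cases T) (auto split: if_splits)
  with T that show thesis by (simp add: bullet_def)
qed

theorem proposition1:
  fixes M N :: eterm
  assumes "EAbs M \<in> LambdaBullet" and "N \<in> LambdaBullet"
  shows "beta (RB (EApp (EAbs M) N)) (RB (esubst M N 0))"
proof -
  obtain L where M: "M = bul 1 L" and abs: "EAbs M = bullet (Abs L)"
    using assms(1) by (rule LambdaBullet_EAbsE)
  obtain N' where N: "N = bullet N'"
    using assms(2) by (auto simp: LambdaBullet_def)
  have "RB (EApp (EAbs M) N) = App (Abs L) N'"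
    by (simp only: RB.simps(1) abs N RB_bullet)
  moreover have "esubst M N 0 = bullet (subst L N' 0)"
    using esubst_bul[of 0 0 L N'] by (simp add: M N bullet_def)
  ultimately show ?thesis
    by (simp add: RB_bullet beta_redex)
qed

end
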